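(* Let $r \geq 2$, $2 \leq h \leq r$, let $k$ be a positive integer with $k \neq 2$, and let $G$ be a finite simple $r$-regular graph. If $G$ has an $h$-factor that is completely $k$-magic, then $G$ is completely $k$-magic.
   Context: $\mathbb{Z}_1 = \mathbb{Z}$ and for $k \geq 2$, $\mathbb{Z}_k$ is the integers modulo $k$. For $c \in \mathbb{Z}_k$, a graph $G$ is $c$-sum $k$-magic if there is an edge labeling $\ell : E(G) \to \mathbb{Z}_k \setminus \{0\}$ such that for every vertex $v$, $\sum_{u \in N(v)} \ell(uv) = c$ in $\mathbb{Z}_k$. $G$ is completely $k$-magic if it is $c$-sum $k$-magic for every $c \in \mathbb{Z}_k$. An $h$-factor of $G$ is an $h$-regular spanning subgraph of $G$. *)

theory Defs
  imports Main
begin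

definition simple_graph :: "'a set \<Rightarrow> 'a set set \<Rightarrow> bool" where
  "simple_graph V E \<longleftrightarrow> finite V \<and> (\<forall>e\<in>E. e \<subseteq> V \<and> card e = 2)"

definition degree :: "'a set set \<Rightarrow> 'a \<Rightarrow> nat" where
  "degree E v = card {e\<in>E. v \<in> e}"

definition regular :: "'a set \<Rightarrow> 'a set set \<Rightarrow> nat \<Rightarrow> bool" where
  "regular V E r \<longleftrightarrow> (\<forall>v\<in>V. degree E v = r)"

definition is_factor :: "'a set \<Rightarrow> 'a set set \<Rightarrow> nat \<Rightarrow> 'a set set \<Rightarrow> bool" where
  "is_factor V E h F \<longleftrightarrow> F \<subseteq> E \<and> regular V F h"

(* Elements of Z_k are represented by integers: for k = 1, Z_1 = Z (all integers, with
   equality); for k \<ge> 2, integers modulo k (equality is congruence mod k).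
   Both cases are captured by int congruence modulo m_k, where m_1 = 0 (mod 0 is equality). *)
definition zmod :: "nat \<Rightarrow> int" where
  "zmod k = (if k = 1 then 0 else int k)"

definition Zk :: "nat \<Rightarrow> int set" where
  "Zk k = (if k = 1 then UNIV else {0..<int k})"

definition sum_magic :: "'a set \<Rightarrow> 'a set set \<Rightarrow> nat \<Rightarrow> int \<Rightarrow> bool" where
  "sum_magic V E k c \<longleftrightarrow>
     (\<exists>l :: 'a set \<Rightarrow> int.
        (\<forall>e\<in>E. l e \<in> Zk k \<and> l e \<noteq> 0) \<and>
        (\<forall>v\<in>V. (\<Sum>e\<in>{e\<in>E. v \<in> e}. l e) mod zmod k = c mod zmod k))"

definition completely_magic :: "'a set \<Rightarrow> 'a set set \<Rightarrow> nat \<Rightarrow> bool" where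
  "completely_magic V E k \<longleftrightarrow> (\<forall>c\<in>Zk k. sum_magic V E k c)"

end

theory Submission
  imports Defs
begin

text \<open>Take a labelling of the \<open>h\<close>-factor with vertex sum \<open>c - (r - h)\<close> and give
  every remaining edge the label \<open>1\<close>: each vertex lies on exactly \<open>r - h\<close> such edges,
  so every vertex sum becomes \<open>c\<close>.\<close>

lemma simple_graph_finite_edges:
  assumes "simple_graph V E"
  shows "finite E"
proof -
  have "E \<subseteq> Pow V" and "finite V"
    using assms unfolding simple_graph_def by auto
  then show ?thesis
    by (meson finite_Pow_iff finite_subset)
qed

lemma sum_magic_mod_cong:
  assumes "c mod zmod k = c' mod zmod k"
  shows "sum_magic V E k c \<longleftrightarrow> sum_magic V E k c'"
  using assms unfolding sum_magic_def by simp

lemma Zk_representative: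
  assumes "k > 0"
  obtains c' where "c' \<in> Zk k" and "c' mod zmod k = c mod zmod k"
proof (cases "k = 1")
  case True
  then show ?thesis
    using that by (simp add: Zk_def)
next
  case False
  then show ?thesis
    using that[of "c mod int k"] assms by (simp add: Zk_def zmod_def)
qed

lemma completely_magic_imp_sum_magic:
  assumes "completely_magic V E k" and "k > 0"
  shows "sum_magic V E k c"
proof -
  obtain c' where "c' \<in> Zk k" and "c' mod zmod k = c mod zmod k"
    using Zk_representative[OF \<open>k > 0\<close>] .
  then show ?thesis
    using assms(1) sum_magic_mod_cong unfolding completely_magic_def by blast
qed

lemma degree_complement_factor:
  assumes "finite E" and "F \<subseteq> E" and "regular V E r" and "regular V F h" and "v \<in> V"
  shows "card {e\<in>E - F. v \<in> e} = r - h"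
proof -
  have "{e\<in>E. v \<in> e} = {e\<in>F. v \<in> e} \<union> {e\<in>E - F. v \<in> e}"
    using \<open>F \<subseteq> E\<close> by auto
  moreover have "finite {e\<in>F. v \<in> e}"
    using assms(1,2) by (auto intro: finite_subset)
  ultimately have "card {e\<in>E. v \<in> e} = card {e\<in>F. v \<in> e} + card {e\<in>E - F. v \<in> e}"
    using \<open>finite E\<close> by (simp add: card_Un_disjoint disjoint_iff)
  with assms(3-5) show ?thesis
    unfolding regular_def degree_def by simp
qed

lemma sum_magic_extend_by_ones:
  assumes "sum_magic V F k (c - int d)" and "finite E" and "F \<subseteq> E" and "k > 0"
    and "\<And>v. v \<in> V \<Longrightarrow> card {e\<in>E - F. v \<in> e} = d"
  shows "sum_magic V E k c"
proof -
  obtain l where l_range: "\<forall>e\<in>F. l e \<in> Zk k \<and> l e \<noteq> 0"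
    and l_sum: "\<forall>v\<in>V. (\<Sum>e\<in>{e\<in>F. v \<in> e}. l e) mod zmod k = (c - int d) mod zmod k"
    using assms(1) unfolding sum_magic_def by blast
  define l' where "l' e = (if e \<in> F then l e else 1)" for e
  have "(1::int) \<in> Zk k"
    using \<open>k > 0\<close> by (simp add: Zk_def)
  then have "\<forall>e\<in>E. l' e \<in> Zk k \<and> l' e \<noteq> 0"
    using l_range by (simp add: l'_def)
  moreover have "(\<Sum>e\<in>{e\<in>E. v \<in> e}. l' e) mod zmod k = c mod zmod k" if "v \<in> V" for v
  proof -
    let ?A = "{e\<in>F. v \<in> e}" and ?B = "{e\<in>E - F. v \<in> e}"
    have "{e\<in>E. v \<in> e} = ?A \<union> ?B"
      using \<open>F \<subseteq> E\<close> by auto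
    moreover have "finite ?A" "finite ?B"
      using assms(2,3) by (auto intro: finite_subset)
    ultimately have "(\<Sum>e\<in>{e\<in>E. v \<in> e}. l' e) = (\<Sum>e\<in>?A. l e) + int (card ?B)"
      by (simp add: sum.union_disjoint disjoint_iff l'_def)
    also have "\<dots> = (\<Sum>e\<in>?A. l e) + int d"
      using assms(5) \<open>v \<in> V\<close> by simp
    finally have "(\<Sum>e\<in>{e\<in>E. v \<in> e}. l' e) mod zmod k
        = ((\<Sum>e\<in>?A. l e) mod zmod k + int d) mod zmod k"
      by (simp add: mod_add_left_eq)
    also have "\<dots> = ((c - int d) mod zmod k + int d) mod zmod k"
      using l_sum \<open>v \<in> V\<close> by simp
    also have "\<dots> = c mod zmod k"
      by (simp add: mod_add_left_eq)
    finally show ?thesis .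
  qed
  ultimately show ?thesis
    unfolding sum_magic_def by blast
qed

theorem theorem11:
  fixes V :: "'a set" and E :: "'a set set" and r h k :: nat
  assumes "r \<ge> 2" and "2 \<le> h" and "h \<le> r"
    and "k > 0" and "k \<noteq> 2"
    and "simple_graph V E" and "regular V E r"
    and "\<exists>F. is_factor V E h F \<and> completely_magic V F k"
  shows "completely_magic V E k"
proof -
  obtain F where "F \<subseteq> E" and "regular V F h" and "completely_magic V F k"
    using assms(8) unfolding is_factor_def by blast
  have "finite E"
    using simple_graph_finite_edges[OF assms(6)] .
  have "sum_magic V E k c" for c
  proof (rule sum_magic_extend_by_ones)
    show "sum_magic V F k (c - int (r - h))"
      using completely_magic_imp_sum_magic[OF \<open>completely_magic V F k\<close> \<open>k > 0\<close>] .
    show "card {e\<in>E - F. v \<in> e} = r - h" if "v \<in> V" for v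
      using degree_complement_factor[OF \<open>finite E\<close> \<open>F \<subseteq> E\<close> assms(7) \<open>regular V F h\<close> that] .
  qed (use \<open>finite E\<close> \<open>F \<subseteq> E\<close> \<open>k > 0\<close> in auto)
  then show ?thesis
    unfolding completely_magic_def by blast
qed

end
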